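(* $\lim_{L\to\infty}Y_L(0)=-1/2$, where $Y_L(t)=\dfrac{\partial y_L(t)/\partial L}{y_L(t)}$.
   Context: For $\alpha\in(0,1/\sqrt2)$ let $L_\alpha=\pi/\mathrm{AGM}(\alpha,\tfrac12\sqrt{1+2\alpha^2})$; $\alpha\mapsto L_\alpha$ is a decreasing bijection from $(0,1/\sqrt2)$ onto $(\pi\sqrt2,\infty)$. For $L>\pi\sqrt2$ let $\alpha$ satisfy $L_\alpha=L$ and let $x_0>y_0>0$ satisfy $x_0^2+y_0^2=1$, $x_0y_0=\alpha^2$. Let $(x_L,y_L,z_L)(t)$ solve $x'=-xz$, $y'=yz$, $z'=x^2-y^2$ ($'=d/dt$) with initial value $(x_0,y_0,0)$. *)

theory Defs
  imports "HOL-Analysis.Analysis"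
begin

fun agm_seq :: "real \<Rightarrow> real \<Rightarrow> nat \<Rightarrow> real \<times> real" where
  "agm_seq a b 0 = (a, b)"
| "agm_seq a b (Suc n) =
     (let (p, q) = agm_seq a b n in ((p + q) / 2, sqrt (p * q)))"

definition AGM :: "real \<Rightarrow> real \<Rightarrow> real" where
  "AGM a b = lim (\<lambda>n. fst (agm_seq a b n))"

definition L_alpha :: "real \<Rightarrow> real" where
  "L_alpha \<alpha> = pi / AGM \<alpha> (sqrt (1 + 2 * \<alpha>\<^sup>2) / 2)"

end

(*
  Gauss's formula AGM(a, b) = pi / (2 I(a, b)), with I(a, b) the integral over [0, pi/2] of
  (a^2 cos^2 t + b^2 sin^2 t)^(-1/2), turns L_alpha into 2 I(alpha, sqrt (1 + 2 alpha^2) / 2).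
  Differentiating under the integral sign gives alpha L_alpha'(alpha) = -2 L_J(alpha), and
  L_J(alpha) -> 2 as alpha -> 0: its integrand differs by at most 2 alpha from
  alpha^2 cos t / L_quad^(3/2), whose integral is exactly 2 / sqrt (1 + 2 alpha^2).  So near 0 the map
  alpha |-> L_alpha is a decreasing bijection onto a half-line, and its inverse alpha(L) is
  differentiable and tends to 0 as L -> infinity.  The initial conditions force
  y_L(0) = y_init(alpha(L)) with y_init(alpha)^2 = (1 - sqrt (1 - 4 alpha^4)) / 2, for which
  alpha y_init'/y_init -> 2.  Hence Y_L(0) = (alpha y_init'/y_init) / (alpha L_alpha') -> 2 / (-4).
*)
theory Submission
  imports Defs "HOL-Real_Asymp.Real_Asymp"
begin

section \<open>Inverting a steeply decreasing function\<close>

locale steep_decreasing =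
  fixes f f' :: "real \<Rightarrow> real" and a c :: real
  assumes a_pos: "0 < a" and c_pos: "0 < c"
    and f_has_derivative: "\<And>x. 0 < x \<Longrightarrow> x \<le> a \<Longrightarrow> (f has_real_derivative f' x) (at x)"
    and f'_bound: "\<And>x. 0 < x \<Longrightarrow> x \<le> a \<Longrightarrow> x * f' x \<le> - c"
begin

lemma f'_neg:
  assumes "0 < x" "x \<le> a"
  shows "f' x < 0"
proof -
  have "x * f' x < 0"
    using f'_bound[OF assms] c_pos by linarith
  then show ?thesis
    using assms(1) by (simp add: mult_less_0_iff)
qed

lemma f_strict_decreasing: "0 < x \<Longrightarrow> x < y \<Longrightarrow> y \<le> a \<Longrightarrow> f y < f x"
  by (rule DERIV_neg_imp_decreasing) (use f_has_derivative f'_neg in force)+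

lemma f_antimono: "0 < x \<Longrightarrow> x \<le> y \<Longrightarrow> y \<le> a \<Longrightarrow> f y \<le> f x"
  using f_strict_decreasing[of x y] by (cases "x = y") auto

lemma f_log_lower_bound:
  assumes "0 < x" "x \<le> a"
  shows "f a + c * (ln a - ln x) \<le> f x"
proof -
  have "f a + c * ln a \<le> f x + c * ln x"
  proof (rule DERIV_nonpos_imp_nonincreasing[OF assms(2)])
    fix z assume z: "x \<le> z" "z \<le> a"
    then have "0 < z"
      using assms by simp
    then have "((\<lambda>z. f z + c * ln z) has_real_derivative f' z + c / z) (at z)"
      using z by (auto intro!: derivative_eq_intros f_has_derivative simp: divide_inverse)
    moreover have "f' z + c / z \<le> 0"
      using f'_bound[of z] z \<open>0 < z\<close> by (simp add: field_simps)
    ultimately show "\<exists>D. ((\<lambda>z. f z + c * ln z) has_real_derivative D) (at z) \<and> D \<le> 0"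
      by blast
  qed
  then show ?thesis
    by (simp add: algebra_simps)
qed

lemma bij_betw_f: "bij_betw f {0<..a} {f a..}"
proof (rule bij_betw_imageI)
  show "inj_on f {0<..a}"
    by (rule inj_onI) (metis greaterThanAtMost_iff linorder_neq_iff f_strict_decreasing less_irrefl)
  have "f ` {0<..a} \<subseteq> {f a..}"
    using f_antimono by auto
  moreover have "T \<in> f ` {0<..a}" if T: "f a \<le> T" for T
  proof -
    define x0 where "x0 = a * exp (- (T - f a) / c)"
    have x0: "0 < x0" "x0 \<le> a"
      using a_pos c_pos T by (simp_all add: x0_def mult_le_cancel_left1 divide_nonpos_pos)
    have "ln x0 = ln a - (T - f a) / c"
      using a_pos by (simp add: x0_def ln_mult minus_divide_left)
    then have "T \<le> f x0"
      using f_log_lower_bound[OF x0] c_pos by (simp add: field_simps)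
    moreover have "continuous_on {x0..a} f"
      using x0 by (intro continuous_at_imp_continuous_on ballI DERIV_isCont[OF f_has_derivative]) auto
    ultimately obtain x where "x0 \<le> x" "x \<le> a" "f x = T"
      using IVT2'[of f a T x0] T x0 by auto
    then show ?thesis
      using x0 by force
  qed
  ultimately show "f ` {0<..a} = {f a..}"
    by auto
qed

definition f_inv :: "real \<Rightarrow> real" where
  "f_inv = the_inv_into {0<..a} f"

lemma f_inv_bounds:
  assumes "f a \<le> T"
  shows "0 < f_inv T" "f_inv T \<le> a"
  using bij_betw_the_inv_into[OF bij_betw_f] assms unfolding f_inv_def bij_betw_def by auto

lemma f_f_inv: "f a \<le> T \<Longrightarrow> f (f_inv T) = T"
  using f_the_inv_into_f_bij_betw[OF bij_betw_f] unfolding f_inv_def by auto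

lemma f_inv_f: "0 < x \<Longrightarrow> x \<le> a \<Longrightarrow> f_inv (f x) = x"
  using bij_betw_f unfolding f_inv_def bij_betw_def by (simp add: the_inv_into_f_f)

lemma f_inv_has_derivative:
  assumes "f a < T"
  shows "(f_inv has_real_derivative inverse (f' (f_inv T))) (at T)"
proof -
  define x where "x = f_inv T"
  have x: "0 < x" "x < a" "f x = T"
    using f_inv_bounds[of T] f_f_inv[of T] assms unfolding x_def by (auto simp: order_le_less)
  have "(f_inv has_derivative (\<lambda>h. inverse (f' x) * h)) (at (f x))"
  proof (rule has_derivative_inverse_on[where S = "{0<..<a}" and f' = "\<lambda>z h. f' z * h"
        and g' = "\<lambda>z h. inverse (f' z) * h"])
    show "(f has_derivative (\<lambda>h. f' z * h)) (at z)" if "z \<in> {0<..<a}" for z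
      using that f_has_derivative[of z] by (simp add: has_field_derivative_def)
    show "(\<lambda>h. f' x * h) \<circ> (\<lambda>h. inverse (f' x) * h) = id"
      using f'_neg[of x] x by (auto simp: fun_eq_iff)
  qed (use x f_inv_f in auto)
  then show ?thesis
    using x by (simp add: has_field_derivative_def x_def)
qed

lemma f_inv_eventually_small:
  assumes "0 < e"
  shows "\<forall>\<^sub>F T in at_top. f_inv T \<in> {0<..<e}"
proof -
  define e' where "e' = min (e / 2) a"
  have e': "0 < e'" "e' \<le> a" "e' < e"
    using assms a_pos by (auto simp: e'_def)
  have "f_inv T \<in> {0<..<e}" if "f e' < T" for T
  proof -
    have T: "f a \<le> T"
      using f_antimono[OF e'(1,2)] that by simp
    have "f_inv T < e'"
    proof (rule ccontr)
      assume "\<not> f_inv T < e'"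
      then have "T \<le> f e'"
        using f_antimono[OF e'(1) _ f_inv_bounds(2)[OF T]] f_f_inv[OF T] by simp
      with that show False
        by simp
    qed
    with e' f_inv_bounds(1)[OF T] show ?thesis
      by simp
  qed
  then show ?thesis
    using eventually_gt_at_top[of "f e'"] by (rule eventually_mono[rotated])
qed

lemma f_inv_tendsto: "filterlim f_inv (at_right 0) at_top"
  unfolding filterlim_at
proof (intro conjI order_tendstoI)
  show "\<forall>\<^sub>F T in at_top. f_inv T \<in> {0<..} \<and> f_inv T \<noteq> 0"
    by (rule eventually_mono[OF f_inv_eventually_small[of 1]]) auto
  show "\<forall>\<^sub>F T in at_top. e < f_inv T" if "e < 0" for e
    by (rule eventually_mono[OF f_inv_eventually_small[of 1]]) (use that in auto)
  show "\<forall>\<^sub>F T in at_top. f_inv T < e" if "0 < e" for e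
    by (rule eventually_mono[OF f_inv_eventually_small[OF that]]) auto
qed

end

section \<open>Gauss's integral for the AGM\<close>

lemma cos_sin_combination_bounds:
  fixes p q :: real
  shows "min p q \<le> p * (cos t)\<^sup>2 + q * (sin t)\<^sup>2" "p * (cos t)\<^sup>2 + q * (sin t)\<^sup>2 \<le> max p q"
proof -
  have eq: "p * (cos t)\<^sup>2 + q * (sin t)\<^sup>2 = p + (q - p) * (sin t)\<^sup>2"
    by (simp add: cos_squared_eq algebra_simps)
  have "0 \<le> (sin t)\<^sup>2" "(sin t)\<^sup>2 \<le> 1" by (simp_all add: abs_square_le_1)
  then have "min 0 (q - p) \<le> (q - p) * (sin t)\<^sup>2" "(q - p) * (sin t)\<^sup>2 \<le> max 0 (q - p)"
    by (cases "p \<le> q"; simp add: mult_le_0_iff mult_left_le mult_nonneg_nonpos)+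
  then show "min p q \<le> p * (cos t)\<^sup>2 + q * (sin t)\<^sup>2" "p * (cos t)\<^sup>2 + q * (sin t)\<^sup>2 \<le> max p q"
    unfolding eq by linarith+
qed

lemma cos_sin_combination_pos:
  fixes p q :: real
  shows "0 < p \<Longrightarrow> 0 < q \<Longrightarrow> 0 < p * (cos t)\<^sup>2 + q * (sin t)\<^sup>2"
  using cos_sin_combination_bounds(1)[of p q t] by linarith

lemma cos_sin_combination_nonzero:
  fixes p q :: real
  shows "0 < p \<Longrightarrow> 0 < q \<Longrightarrow> p * (cos t)\<^sup>2 + q * (sin t)\<^sup>2 \<noteq> 0"
  using cos_sin_combination_pos[of p q t] by linarith

definition gauss_integrand :: "real \<Rightarrow> real \<Rightarrow> real \<Rightarrow> real" where
  "gauss_integrand a b t = 1 / sqrt (a\<^sup>2 * (cos t)\<^sup>2 + b\<^sup>2 * (sin t)\<^sup>2)"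

definition gauss_integral :: "real \<Rightarrow> real \<Rightarrow> real" where
  "gauss_integral a b = integral {0..pi/2} (gauss_integrand a b)"

lemma continuous_on_gauss_integrand:
  "0 < a \<Longrightarrow> 0 < b \<Longrightarrow> continuous_on S (gauss_integrand a b)"
  unfolding gauss_integrand_def
  by (intro continuous_intros) (simp add: cos_sin_combination_nonzero)

lemma gauss_integrand_bounds:
  assumes "0 < a" "0 < b"
  shows "1 / max a b \<le> gauss_integrand a b t" "gauss_integrand a b t \<le> 1 / min a b"
proof -
  define r where "r = sqrt (a\<^sup>2 * (cos t)\<^sup>2 + b\<^sup>2 * (sin t)\<^sup>2)"
  have "min (a\<^sup>2) (b\<^sup>2) = (min a b)\<^sup>2" "max (a\<^sup>2) (b\<^sup>2) = (max a b)\<^sup>2"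
    using assms by (auto simp: min_def max_def power_mono)
  then have "sqrt ((min a b)\<^sup>2) \<le> r" "r \<le> sqrt ((max a b)\<^sup>2)"
    unfolding r_def using cos_sin_combination_bounds real_sqrt_le_mono by metis+
  then have "min a b \<le> r" "r \<le> max a b"
    using assms by simp_all
  then show "1 / max a b \<le> gauss_integrand a b t" "gauss_integrand a b t \<le> 1 / min a b"
    unfolding gauss_integrand_def r_def[symmetric] using assms by (simp_all add: frac_le)
qed

lemma gauss_mean_bounds:
  assumes "0 < a" "0 < b"
  shows "min a b \<le> pi / (2 * gauss_integral a b)" "pi / (2 * gauss_integral a b) \<le> max a b"
proof -
  have int: "gauss_integrand a b integrable_on {0..pi/2}"
    using assms by (intro integrable_continuous_interval continuous_on_gauss_integrand)
  have "integral {0..pi/2} (\<lambda>t. 1 / max a b) \<le> gauss_integral a b"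
    unfolding gauss_integral_def
    by (rule integral_le) (use int gauss_integrand_bounds[OF assms] in auto)
  moreover have "gauss_integral a b \<le> integral {0..pi/2} (\<lambda>t. 1 / min a b)"
    unfolding gauss_integral_def
    by (rule integral_le) (use int gauss_integrand_bounds[OF assms] in auto)
  ultimately have lo: "pi / (2 * max a b) \<le> gauss_integral a b"
    and hi: "gauss_integral a b \<le> pi / (2 * min a b)"
    by simp_all
  have "0 < gauss_integral a b"
    using assms by (intro less_le_trans[OF _ lo]) simp
  moreover have "min a b * (2 * gauss_integral a b) \<le> pi" "pi \<le> max a b * (2 * gauss_integral a b)"
    using lo hi assms by (simp_all add: pos_le_divide_eq pos_divide_le_eq mult_ac)
  ultimately show "min a b \<le> pi / (2 * gauss_integral a b)" "pi / (2 * gauss_integral a b) \<le> max a b"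
    by (simp_all add: pos_le_divide_eq pos_divide_le_eq)
qed

definition gauss_rational_integrand :: "real \<Rightarrow> real \<Rightarrow> real \<Rightarrow> real" where
  "gauss_rational_integrand a b x = 1 / sqrt ((a\<^sup>2 + x\<^sup>2) * (b\<^sup>2 + x\<^sup>2))"

(* The pull-back of gauss_rational_integrand under x = g tan t. *)
definition gauss_tan_integrand :: "real \<Rightarrow> real \<Rightarrow> real \<Rightarrow> real \<Rightarrow> real" where
  "gauss_tan_integrand a b g t =
     g / sqrt ((a\<^sup>2 * (cos t)\<^sup>2 + g\<^sup>2 * (sin t)\<^sup>2) * (b\<^sup>2 * (cos t)\<^sup>2 + g\<^sup>2 * (sin t)\<^sup>2))"

lemma continuous_on_gauss_rational_integrand:
  "0 < a \<Longrightarrow> 0 < b \<Longrightarrow> continuous_on S (gauss_rational_integrand a b)"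
  unfolding gauss_rational_integrand_def
  by (intro continuous_intros) (auto simp: add_pos_nonneg)

lemma continuous_on_gauss_tan_integrand:
  "0 < a \<Longrightarrow> 0 < b \<Longrightarrow> 0 < g \<Longrightarrow> continuous_on S (gauss_tan_integrand a b g)"
  unfolding gauss_tan_integrand_def
  by (intro continuous_intros) (simp add: cos_sin_combination_nonzero)

lemma gauss_tan_integrand_eq:
  assumes "0 < g" "cos t \<noteq> 0"
  shows "gauss_tan_integrand a b g t = g / (cos t)\<^sup>2 * gauss_rational_integrand a b (g * tan t)"
proof -
  define A where "A c = c\<^sup>2 * (cos t)\<^sup>2 + g\<^sup>2 * (sin t)\<^sup>2" for c
  have "c\<^sup>2 + (g * tan t)\<^sup>2 = A c / (cos t)\<^sup>2" for c
    using assms by (simp add: A_def tan_def field_simps power2_eq_square)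
  then have "(a\<^sup>2 + (g * tan t)\<^sup>2) * (b\<^sup>2 + (g * tan t)\<^sup>2) = A a * A b / ((cos t)\<^sup>2)\<^sup>2"
    by (simp add: power2_eq_square)
  then have "sqrt ((a\<^sup>2 + (g * tan t)\<^sup>2) * (b\<^sup>2 + (g * tan t)\<^sup>2)) = sqrt (A a * A b) / (cos t)\<^sup>2"
    by (simp add: real_sqrt_divide real_sqrt_unique)
  then show ?thesis
    using assms unfolding gauss_tan_integrand_def gauss_rational_integrand_def A_def by simp
qed

lemma integral_gauss_tan_integrand:
  assumes "0 < a" "0 < b" "0 < g" "0 \<le> \<beta>" "\<beta> < pi/2"
  shows "integral {0..\<beta>} (gauss_tan_integrand a b g) =
    integral {0..g * tan \<beta>} (gauss_rational_integrand a b)"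
proof -
  have cos_pos: "0 < cos t" if "t \<in> {0..\<beta>}" for t
    using that assms by (intro cos_gt_zero_pi) auto
  have tan_mono: "0 \<le> tan t \<and> tan t \<le> tan \<beta>" if "t \<in> {0..\<beta>}" for t
    using that assms tan_mono_le[of 0 t] tan_mono_le[of t \<beta>] by auto
  have "((\<lambda>t. (g / (cos t)\<^sup>2) *\<^sub>R gauss_rational_integrand a b (g * tan t)) has_integral
      integral {g * tan 0..g * tan \<beta>} (gauss_rational_integrand a b)) {0..\<beta>}"
  proof (rule has_integral_substitution)
    show "0 \<le> \<beta>"
      by (fact assms)
    show "g * tan 0 \<le> g * tan \<beta>"
      using tan_mono[of \<beta>] assms by simp
    show "(\<lambda>t. g * tan t) ` {0..\<beta>} \<subseteq> {0..g * tan \<beta>}"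
      using tan_mono assms by (auto simp: image_subset_iff)
    show "continuous_on {0..g * tan \<beta>} (gauss_rational_integrand a b)"
      using assms(1,2) by (rule continuous_on_gauss_rational_integrand)
    show "((\<lambda>t. g * tan t) has_real_derivative g / (cos t)\<^sup>2) (at t within {0..\<beta>})"
      if "t \<in> {0..\<beta>}" for t
    proof -
      have "((\<lambda>t. g * tan t) has_real_derivative g * inverse ((cos t)\<^sup>2)) (at t)"
        using cos_pos[OF that] by (auto intro!: derivative_eq_intros)
      then show ?thesis
        by (simp add: divide_inverse has_field_derivative_at_within)
    qed
  qed
  then have "((\<lambda>t. (g / (cos t)\<^sup>2) *\<^sub>R gauss_rational_integrand a b (g * tan t)) has_integral
      integral {0..g * tan \<beta>} (gauss_rational_integrand a b)) {0..\<beta>}"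
    by simp
  then have "(gauss_tan_integrand a b g has_integral
      integral {0..g * tan \<beta>} (gauss_rational_integrand a b)) {0..\<beta>}"
  proof (rule has_integral_eq[rotated])
    fix t assume "t \<in> {0..\<beta>}"
    then have "cos t \<noteq> 0"
      using cos_pos by force
    then show "(g / (cos t)\<^sup>2) *\<^sub>R gauss_rational_integrand a b (g * tan t) = gauss_tan_integrand a b g t"
      using assms by (simp add: gauss_tan_integrand_eq)
  qed
  then show ?thesis
    by (rule integral_unique)
qed

lemma gauss_tan_integral_tendsto:
  assumes "0 < a" "0 < b" "0 < g"
  shows "((\<lambda>X. integral {0..X} (gauss_rational_integrand a b))
           \<longlongrightarrow> integral {0..pi/2} (gauss_tan_integrand a b g)) at_top"
proof -
  let ?P = "\<lambda>\<beta>. integral {0..\<beta>} (gauss_tan_integrand a b g)"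
  have "continuous_on {0..pi/2} ?P"
    using assms by (intro indefinite_integral_continuous_1 integrable_continuous_interval
        continuous_on_gauss_tan_integrand)
  moreover have "((\<lambda>X. arctan (X / g)) \<longlongrightarrow> pi/2) at_top"
    using assms by real_asymp
  moreover have "\<forall>\<^sub>F X in at_top. arctan (X / g) \<in> {0..pi/2}"
  proof (rule eventually_mono[OF eventually_ge_at_top[of 0]])
    show "arctan (X / g) \<in> {0..pi/2}" if "0 \<le> X" for X
      using that assms arctan_ubound[of "X / g"] by simp
  qed
  ultimately have "((\<lambda>X. ?P (arctan (X / g))) \<longlongrightarrow> ?P (pi/2)) at_top"
    using continuous_on_tendsto_compose[of "{0..pi/2}" ?P "\<lambda>X. arctan (X / g)" "pi/2" at_top] by auto
  moreover have "\<forall>\<^sub>F X in at_top. ?P (arctan (X / g)) = integral {0..X} (gauss_rational_integrand a b)"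
  proof (rule eventually_mono[OF eventually_ge_at_top[of 0]])
    show "?P (arctan (X / g)) = integral {0..X} (gauss_rational_integrand a b)" if "0 \<le> X" for X
    proof -
      have "0 \<le> arctan (X / g)" "arctan (X / g) < pi/2"
        using that assms arctan_ubound[of "X / g"] by simp_all
      then show ?thesis
        using integral_gauss_tan_integrand[OF assms, of "arctan (X / g)"] assms by (simp add: tan_arctan)
    qed
  qed
  ultimately show ?thesis
    by (rule Lim_transform_eventually)
qed

lemma gauss_tan_integral_indep:
  assumes "0 < a" "0 < b" "0 < g" "0 < h"
  shows "integral {0..pi/2} (gauss_tan_integrand a b g) = integral {0..pi/2} (gauss_tan_integrand a b h)"
  using gauss_tan_integral_tendsto[OF assms(1-3)] gauss_tan_integral_tendsto[OF assms(1,2,4)]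
  by (rule tendsto_unique[OF trivial_limit_at_top_linorder])

lemma gauss_integral_eq_tan_integral:
  assumes "0 < a" "0 < b"
  shows "gauss_integral a b = integral {0..pi/2} (gauss_tan_integrand a b b)"
proof -
  have "gauss_integrand a b = gauss_tan_integrand a b b"
  proof
    fix t
    have "b\<^sup>2 * (cos t)\<^sup>2 + b\<^sup>2 * (sin t)\<^sup>2 = b\<^sup>2"
      by (simp flip: distrib_left)
    then show "gauss_integrand a b t = gauss_tan_integrand a b b t"
      using assms unfolding gauss_integrand_def gauss_tan_integrand_def by (simp add: real_sqrt_mult)
  qed
  then show ?thesis
    unfolding gauss_integral_def by simp
qed

lemma gauss_tan_integrand_reflect:
  assumes "0 < a" "0 < b"
  shows "gauss_tan_integrand a b (sqrt (a * b)) (pi/2 - t) = gauss_tan_integrand a b (sqrt (a * b)) t"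
proof -
  have "(a\<^sup>2 * (sin t)\<^sup>2 + a * b * (cos t)\<^sup>2) * (b\<^sup>2 * (sin t)\<^sup>2 + a * b * (cos t)\<^sup>2) =
        (a\<^sup>2 * (cos t)\<^sup>2 + a * b * (sin t)\<^sup>2) * (b\<^sup>2 * (cos t)\<^sup>2 + a * b * (sin t)\<^sup>2)"
    by (simp add: algebra_simps power2_eq_square)
  then show ?thesis
    using assms unfolding gauss_tan_integrand_def by (simp add: cos_diff sin_diff)
qed

lemma gauss_integrand_double_angle:
  assumes "0 < a" "0 < b"
  shows "gauss_integrand ((a + b) / 2) (sqrt (a * b)) (2 * t - pi/2) =
    gauss_tan_integrand a b (sqrt (a * b)) t"
proof -
  define X where "X = (a * (cos t)\<^sup>2 + b * (sin t)\<^sup>2) * (b * (cos t)\<^sup>2 + a * (sin t)\<^sup>2)"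
  have cos2: "cos (2 * t - pi/2) = 2 * sin t * cos t"
    by (simp add: cos_diff sin_double)
  have sin2: "sin (2 * t - pi/2) = (sin t)\<^sup>2 - (cos t)\<^sup>2"
    by (simp add: sin_diff cos_double)
  have "((a + b) / 2)\<^sup>2 * (cos (2 * t - pi/2))\<^sup>2 + (sqrt (a * b))\<^sup>2 * (sin (2 * t - pi/2))\<^sup>2 = X"
    using assms unfolding cos2 sin2 X_def by (simp add: algebra_simps power2_eq_square)
  moreover have "(a\<^sup>2 * (cos t)\<^sup>2 + (sqrt (a * b))\<^sup>2 * (sin t)\<^sup>2) *
      (b\<^sup>2 * (cos t)\<^sup>2 + (sqrt (a * b))\<^sup>2 * (sin t)\<^sup>2) = (a * b) * X"
    using assms unfolding X_def by (simp add: algebra_simps power2_eq_square)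
  ultimately show ?thesis
    using assms unfolding gauss_integrand_def gauss_tan_integrand_def by (simp add: real_sqrt_mult)
qed

lemma gauss_integral_double_angle:
  assumes "0 < a" "0 < b"
  shows "gauss_integral ((a + b) / 2) (sqrt (a * b)) =
    2 * integral {pi/4..pi/2} (gauss_tan_integrand a b (sqrt (a * b)))"
proof -
  define g where "g = sqrt (a * b)"
  have "((\<lambda>t. 2 *\<^sub>R gauss_integrand ((a + b) / 2) g (2 * t - pi/2)) has_integral
      integral {2 * (pi/4) - pi/2..2 * (pi/2) - pi/2} (gauss_integrand ((a + b) / 2) g)) {pi/4..pi/2}"
  proof (rule has_integral_substitution[where c=0 and d="pi/2"])
    show "continuous_on {0..pi/2} (gauss_integrand ((a + b) / 2) g)"
      using assms by (intro continuous_on_gauss_integrand) (simp_all add: g_def)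
    show "((\<lambda>t. 2 * t - pi/2) has_real_derivative 2) (at t within {pi/4..pi/2})" for t
      by (auto intro!: derivative_eq_intros)
  qed auto
  then have "((\<lambda>t. 2 * gauss_tan_integrand a b g t) has_integral gauss_integral ((a + b) / 2) g) {pi/4..pi/2}"
    using assms by (simp add: g_def gauss_integrand_double_angle gauss_integral_def)
  then have "integral {pi/4..pi/2} (\<lambda>t. 2 * gauss_tan_integrand a b g t) = gauss_integral ((a + b) / 2) g"
    by (rule integral_unique)
  then show ?thesis
    by (simp add: integral_mult_right g_def)
qed

lemma gauss_tan_integral_halves:
  assumes "0 < a" "0 < b"
  defines "P \<equiv> gauss_tan_integrand a b (sqrt (a * b))"
  shows "integral {pi/4..pi/2} P = integral {0..pi/4} P"
proof -
  have "((\<lambda>t. (-1) *\<^sub>R P (pi/2 - t)) has_integral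
      integral {pi/2 - pi/4..pi/2 - pi/2} P - integral {pi/2 - pi/2..pi/2 - pi/4} P) {pi/4..pi/2}"
  proof (rule has_integral_substitution_general[where s="{}" and c=0 and d="pi/2"])
    show "continuous_on {0..pi/2} P"
      using assms unfolding P_def by (intro continuous_on_gauss_tan_integrand) simp_all
    show "continuous_on {pi/4..pi/2} (\<lambda>t. pi/2 - t)"
      by (intro continuous_intros)
    show "((\<lambda>t. pi/2 - t) has_real_derivative -1) (at t within {pi/4..pi/2})" for t
      by (auto intro!: derivative_eq_intros)
    show "(\<lambda>t. pi/2 - t) ` {pi/4..pi/2} \<subseteq> {0..pi/2}"
      by (auto simp: image_subset_iff)
  qed simp_all
  then have "((\<lambda>t. - P t) has_integral - integral {0..pi/4} P) {pi/4..pi/2}"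
    using gauss_tan_integrand_reflect[OF assms(1,2)] by (simp add: P_def)
  then show ?thesis
    by (simp add: has_integral_neg_iff integral_unique)
qed

(*
  For every g > 0, the integral of gauss_tan_integrand a b g is the improper integral of
  gauss_rational_integrand a b over [0, oo).  With g = b it is gauss_integral a b; with
  g = sqrt (a b) the integrand is symmetric about pi/4 and, after t |-> 2 t - pi/2, becomes the
  integrand of gauss_integral ((a + b) / 2) (sqrt (a b)).
*)
lemma gauss_integral_agm_step:
  assumes "0 < a" "0 < b"
  shows "gauss_integral ((a + b) / 2) (sqrt (a * b)) = gauss_integral a b"
proof -
  define P where "P = gauss_tan_integrand a b (sqrt (a * b))"
  have "integral {0..pi/4} P + integral {pi/4..pi/2} P = integral {0..pi/2} P"
    using assms unfolding P_def
    by (intro Henstock_Kurzweil_Integration.integral_combine integrable_continuous_interval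
        continuous_on_gauss_tan_integrand) simp_all
  then have "gauss_integral ((a + b) / 2) (sqrt (a * b)) = integral {0..pi/2} P"
    using gauss_integral_double_angle[OF assms] gauss_tan_integral_halves[OF assms]
    by (simp add: P_def)
  also have "\<dots> = gauss_integral a b"
    using gauss_tan_integral_indep[of a b "sqrt (a * b)" b] gauss_integral_eq_tan_integral assms
    by (simp add: P_def)
  finally show ?thesis .
qed

lemma agm_seq_Suc_components:
  "fst (agm_seq a b (Suc n)) = (fst (agm_seq a b n) + snd (agm_seq a b n)) / 2"
  "snd (agm_seq a b (Suc n)) = sqrt (fst (agm_seq a b n) * snd (agm_seq a b n))"
  by (simp_all add: split_beta)

lemma agm_seq_pos:
  assumes "0 < a" "0 < b"
  shows "0 < fst (agm_seq a b n) \<and> 0 < snd (agm_seq a b n)"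
  by (induction n) (simp_all del: agm_seq.simps(2) add: assms agm_seq_Suc_components)

lemma gauss_integral_agm_seq:
  assumes "0 < a" "0 < b"
  shows "gauss_integral (fst (agm_seq a b n)) (snd (agm_seq a b n)) = gauss_integral a b"
  by (induction n)
     (simp_all del: agm_seq.simps(2) add: agm_seq_Suc_components gauss_integral_agm_step agm_seq_pos assms)

lemma arith_geom_mean_gap:
  fixes p q :: real
  assumes "0 \<le> p" "0 \<le> q"
  shows "\<bar>(p + q) / 2 - sqrt (p * q)\<bar> \<le> \<bar>p - q\<bar> / 2"
proof -
  define u v where "u = sqrt p" and "v = sqrt q"
  have uv: "p = u\<^sup>2" "q = v\<^sup>2" "0 \<le> u" "0 \<le> v"
    using assms by (simp_all add: u_def v_def)
  have "(u - v)\<^sup>2 = \<bar>u - v\<bar> * \<bar>u - v\<bar>"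
    by (simp add: power2_eq_square)
  also have "\<dots> \<le> \<bar>u - v\<bar> * (u + v)"
    using uv by (intro mult_left_mono) auto
  finally have gap: "(u - v)\<^sup>2 \<le> \<bar>u - v\<bar> * (u + v)" .
  have "(p + q) / 2 - sqrt (p * q) = (u - v)\<^sup>2 / 2"
    using uv by (simp add: real_sqrt_mult power2_eq_square algebra_simps)
  then have "\<bar>(p + q) / 2 - sqrt (p * q)\<bar> = (u - v)\<^sup>2 / 2"
    by (simp only:) simp
  also have "\<dots> \<le> \<bar>u - v\<bar> * (u + v) / 2"
    using gap by simp
  also have "\<dots> = \<bar>p - q\<bar> / 2"
  proof -
    have "p - q = (u - v) * (u + v)"
      using uv by (simp add: power2_eq_square algebra_simps)
    then show ?thesis
      using uv by (simp add: abs_mult)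
  qed
  finally show ?thesis .
qed

lemma agm_seq_gap:
  assumes "0 < a" "0 < b"
  shows "\<bar>fst (agm_seq a b n) - snd (agm_seq a b n)\<bar> \<le> \<bar>a - b\<bar> / 2 ^ n"
proof (induction n)
  case (Suc n)
  have "\<bar>fst (agm_seq a b (Suc n)) - snd (agm_seq a b (Suc n))\<bar>
      \<le> \<bar>fst (agm_seq a b n) - snd (agm_seq a b n)\<bar> / 2"
    unfolding agm_seq_Suc_components
    using agm_seq_pos[OF assms, of n] by (intro arith_geom_mean_gap) auto
  with Suc.IH show ?case
    by simp
qed simp

theorem AGM_eq_gauss_integral:
  assumes "0 < a" "0 < b"
  shows "AGM a b = pi / (2 * gauss_integral a b)"
proof -
  define M where "M = pi / (2 * gauss_integral a b)"
  have bound: "\<bar>fst (agm_seq a b n) - M\<bar> \<le> \<bar>a - b\<bar> / 2 ^ n" for n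
  proof -
    define p q where "p = fst (agm_seq a b n)" and "q = snd (agm_seq a b n)"
    have "0 < p" "0 < q" "M = pi / (2 * gauss_integral p q)"
      using agm_seq_pos[OF assms, of n] gauss_integral_agm_seq[OF assms, of n]
      by (simp_all add: p_def q_def M_def)
    then have "min p q \<le> M" "M \<le> max p q"
      using gauss_mean_bounds by simp_all
    then have "\<bar>p - M\<bar> \<le> \<bar>p - q\<bar>"
      by linarith
    also have "\<dots> \<le> \<bar>a - b\<bar> / 2 ^ n"
      unfolding p_def q_def by (rule agm_seq_gap[OF assms])
    finally show ?thesis
      by (simp add: p_def)
  qed
  have "\<forall>\<^sub>F n in sequentially. norm (fst (agm_seq a b n) - M) \<le> \<bar>a - b\<bar> / 2 ^ n"
    by (intro always_eventually allI) (simp add: bound)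
  moreover have "(\<lambda>n. \<bar>a - b\<bar> / 2 ^ n) \<longlonglongrightarrow> 0"
    by (intro LIMSEQ_divide_realpow_zero) auto
  ultimately have "(\<lambda>n. fst (agm_seq a b n) - M) \<longlonglongrightarrow> 0"
    by (rule Lim_null_comparison)
  then have "(\<lambda>n. fst (agm_seq a b n)) \<longlonglongrightarrow> M"
    by (rule LIM_zero_cancel)
  then show ?thesis
    unfolding AGM_def M_def by (rule limI)
qed

section \<open>The function L_alpha near 0\<close>

definition L_quad :: "real \<Rightarrow> real \<Rightarrow> real" where
  "L_quad \<alpha> t = \<alpha>\<^sup>2 * (cos t)\<^sup>2 + (1 + 2 * \<alpha>\<^sup>2) / 4 * (sin t)\<^sup>2"

lemma L_quad_pos: "0 < \<alpha> \<Longrightarrow> 0 < L_quad \<alpha> t"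
  unfolding L_quad_def by (rule cos_sin_combination_pos) (simp_all add: add_pos_nonneg)

lemma continuous_on_L_quad [continuous_intros]:
  fixes f g :: "'a::t2_space \<Rightarrow> real"
  shows "continuous_on S f \<Longrightarrow> continuous_on S g \<Longrightarrow> continuous_on S (\<lambda>x. L_quad (f x) (g x))"
  unfolding L_quad_def by (intro continuous_intros) auto

lemma L_alpha_eq_integral:
  assumes "0 < \<alpha>"
  shows "L_alpha \<alpha> = 2 * integral {0..pi/2} (\<lambda>t. 1 / sqrt (L_quad \<alpha> t))"
proof -
  define b where "b = sqrt (1 + 2 * \<alpha>\<^sup>2) / 2"
  have "0 < b" "b\<^sup>2 = (1 + 2 * \<alpha>\<^sup>2) / 4"
    by (simp_all add: b_def power_divide add_pos_nonneg)
  then have "gauss_integrand \<alpha> b = (\<lambda>t. 1 / sqrt (L_quad \<alpha> t))"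
    by (simp add: fun_eq_iff gauss_integrand_def L_quad_def)
  then have "gauss_integral \<alpha> b = integral {0..pi/2} (\<lambda>t. 1 / sqrt (L_quad \<alpha> t))"
    by (simp add: gauss_integral_def)
  with AGM_eq_gauss_integral[OF assms \<open>0 < b\<close>] show ?thesis
    unfolding L_alpha_def b_def[symmetric] by simp
qed

definition L_J_integrand :: "real \<Rightarrow> real \<Rightarrow> real" where
  "L_J_integrand \<alpha> t = \<alpha>\<^sup>2 * ((cos t)\<^sup>2 + (sin t)\<^sup>2 / 2) / (L_quad \<alpha> t * sqrt (L_quad \<alpha> t))"

definition L_J :: "real \<Rightarrow> real" where
  "L_J \<alpha> = integral {0..pi/2} (L_J_integrand \<alpha>)"

lemma continuous_on_L_J_integrand: "continuous_on ({0<..} \<times> S) (\<lambda>(\<alpha>, t). L_J_integrand \<alpha> t)"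
proof -
  have "L_quad \<alpha> t \<noteq> 0" if "0 < \<alpha>" for \<alpha> t
    using L_quad_pos[OF that, of t] by linarith
  then show ?thesis
    unfolding L_J_integrand_def case_prod_beta
    by (intro continuous_intros) auto
qed

lemma L_quad_has_derivative:
  "((\<lambda>\<alpha>. L_quad \<alpha> t) has_real_derivative \<alpha> * (2 * (cos t)\<^sup>2 + (sin t)\<^sup>2)) (at \<alpha>)"
  unfolding L_quad_def by (auto intro!: derivative_eq_intros simp: algebra_simps)

lemma L_integrand_has_derivative:
  assumes "0 < \<alpha>"
  shows "((\<lambda>\<alpha>. 1 / sqrt (L_quad \<alpha> t)) has_real_derivative - L_J_integrand \<alpha> t / \<alpha>) (at \<alpha>)"
proof -
  define D where "D = \<alpha> * (2 * (cos t)\<^sup>2 + (sin t)\<^sup>2)"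
  have H: "0 < L_quad \<alpha> t"
    using assms by (rule L_quad_pos)
  have "((\<lambda>\<alpha>. sqrt (L_quad \<alpha> t)) has_real_derivative inverse (sqrt (L_quad \<alpha> t)) / 2 * D) (at \<alpha>)"
    unfolding D_def by (rule DERIV_chain2[OF DERIV_real_sqrt[OF H] L_quad_has_derivative])
  then have "((\<lambda>\<alpha>. 1 / sqrt (L_quad \<alpha> t)) has_real_derivative
      (0 * sqrt (L_quad \<alpha> t) - 1 * (inverse (sqrt (L_quad \<alpha> t)) / 2 * D)) /
      (sqrt (L_quad \<alpha> t) * sqrt (L_quad \<alpha> t))) (at \<alpha>)"
    by (rule DERIV_divide[OF DERIV_const]) (use H in simp)
  moreover have "(0 * sqrt (L_quad \<alpha> t) - 1 * (inverse (sqrt (L_quad \<alpha> t)) / 2 * D)) /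
      (sqrt (L_quad \<alpha> t) * sqrt (L_quad \<alpha> t)) = - L_J_integrand \<alpha> t / \<alpha>"
    using H assms unfolding L_J_integrand_def D_def
    by (simp add: field_simps power2_eq_square)
  ultimately show ?thesis
    by simp
qed

lemma L_alpha_has_derivative:
  assumes "0 < \<alpha>"
  shows "(L_alpha has_real_derivative - 2 * L_J \<alpha> / \<alpha>) (at \<alpha>)"
proof -
  let ?I = "\<lambda>\<alpha>. integral (cbox 0 (pi/2)) (\<lambda>t. 1 / sqrt (L_quad \<alpha> t))"
  have "(?I has_real_derivative integral (cbox 0 (pi/2)) (\<lambda>t. - L_J_integrand \<alpha> t / \<alpha>))
      (at \<alpha> within {0<..})"
  proof (rule leibniz_rule_field_derivative)
    fix \<beta> t :: real
    assume "\<beta> \<in> {0<..}"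
    then have "0 < \<beta>"
      by simp
    then show "((\<lambda>\<alpha>. 1 / sqrt (L_quad \<alpha> t)) has_real_derivative - L_J_integrand \<beta> t / \<beta>)
        (at \<beta> within {0<..})"
      using L_integrand_has_derivative[of \<beta> t] by (simp add: has_field_derivative_at_within)
  next
    fix \<beta> :: real
    assume "\<beta> \<in> {0<..}"
    then have "L_quad \<beta> t \<noteq> 0" for t
      using L_quad_pos[of \<beta> t] by simp
    then show "(\<lambda>t. 1 / sqrt (L_quad \<beta> t)) integrable_on cbox 0 (pi/2)"
      by (intro integrable_continuous continuous_intros) auto
  next
    show "continuous_on ({0<..} \<times> cbox 0 (pi/2)) (\<lambda>(\<alpha>, t). - L_J_integrand \<alpha> t / \<alpha>)"
      using continuous_on_L_J_integrand unfolding case_prod_beta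
      by (intro continuous_intros) auto
  qed (use assms in auto)
  then have "(?I has_real_derivative - L_J \<alpha> / \<alpha>) (at \<alpha>)"
    using assms by (simp add: at_within_open[of \<alpha> "{0<..}"] L_J_def)
  from DERIV_cmult[OF this, of 2]
  have "((\<lambda>\<alpha>. 2 * ?I \<alpha>) has_real_derivative - 2 * L_J \<alpha> / \<alpha>) (at \<alpha>)"
    by simp
  then show ?thesis
  proof (rule has_field_derivative_transform_within_open)
    show "2 * ?I \<beta> = L_alpha \<beta>" if "\<beta> \<in> {0<..}" for \<beta>
      using that by (simp add: L_alpha_eq_integral)
  qed (use assms in auto)
qed

lemma L_quad_cos_has_integral:
  assumes "0 < \<alpha>"
  shows "((\<lambda>t. \<alpha>\<^sup>2 * cos t / (L_quad \<alpha> t * sqrt (L_quad \<alpha> t))) has_integral 2 / sqrt (1 + 2 * \<alpha>\<^sup>2))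
    {0..pi/2}"
proof -
  have deriv: "((\<lambda>t. sin t / sqrt (L_quad \<alpha> t)) has_real_derivative
      \<alpha>\<^sup>2 * cos t / (L_quad \<alpha> t * sqrt (L_quad \<alpha> t))) (at t)" for t
  proof -
    define H k where "H = L_quad \<alpha> t" and "k = (1 - 2 * \<alpha>\<^sup>2) / 4"
    have H: "0 < H"
      unfolding H_def using assms by (rule L_quad_pos)
    have "((\<lambda>t. L_quad \<alpha> t) has_real_derivative 2 * sin t * cos t * k) (at t)"
      unfolding L_quad_def k_def by (auto intro!: derivative_eq_intros simp: algebra_simps)
    then have "((\<lambda>t. sin t / sqrt (L_quad \<alpha> t)) has_real_derivative
        (cos t * sqrt H - sin t * (inverse (sqrt H) / 2 * (2 * sin t * cos t * k))) / (sqrt H * sqrt H))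
        (at t)"
      using H unfolding H_def by (intro DERIV_divide DERIV_sin DERIV_chain2[OF DERIV_real_sqrt]) auto
    moreover have "(cos t * sqrt H - sin t * (inverse (sqrt H) / 2 * (2 * sin t * cos t * k))) / (sqrt H * sqrt H)
        = (cos t * H - (sin t)\<^sup>2 * cos t * k) / (H * sqrt H)"
      using H by (simp add: field_simps power2_eq_square)
    moreover have "cos t * H - (sin t)\<^sup>2 * cos t * k = \<alpha>\<^sup>2 * cos t"
      unfolding H_def L_quad_def k_def by (simp add: cos_squared_eq field_simps)
    ultimately show ?thesis
      by (simp add: H_def)
  qed
  have "((\<lambda>t. \<alpha>\<^sup>2 * cos t / (L_quad \<alpha> t * sqrt (L_quad \<alpha> t))) has_integral
      sin (pi/2) / sqrt (L_quad \<alpha> (pi/2)) - sin 0 / sqrt (L_quad \<alpha> 0)) {0..pi/2}"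
    by (intro fundamental_theorem_of_calculus)
       (auto simp: has_real_derivative_iff_has_vector_derivative[symmetric]
         intro: has_field_derivative_at_within deriv)
  moreover have "sin (pi/2) / sqrt (L_quad \<alpha> (pi/2)) - sin 0 / sqrt (L_quad \<alpha> 0) = 2 / sqrt (1 + 2 * \<alpha>\<^sup>2)"
    by (simp add: L_quad_def real_sqrt_divide)
  ultimately show ?thesis
    by simp
qed

lemma L_quad_lower_bounds:
  assumes "0 < \<alpha>" "\<alpha> \<le> 1/2"
  shows "\<alpha> \<le> sqrt (L_quad \<alpha> t)" "(sin t)\<^sup>2 \<le> 4 * L_quad \<alpha> t"
proof -
  have "\<alpha> * \<alpha> \<le> 1/2 * (1/2)"
    using assms by (intro mult_mono) auto
  then have "\<alpha>\<^sup>2 \<le> (1 + 2 * \<alpha>\<^sup>2) / 4"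
    by (simp add: power2_eq_square)
  then have "\<alpha>\<^sup>2 \<le> L_quad \<alpha> t"
    using cos_sin_combination_bounds(1)[of "\<alpha>\<^sup>2" "(1 + 2 * \<alpha>\<^sup>2) / 4" t]
    by (simp add: L_quad_def)
  then show "\<alpha> \<le> sqrt (L_quad \<alpha> t)"
    using assms(1) real_le_rsqrt by simp
  have "4 * L_quad \<alpha> t = (sin t)\<^sup>2 + (4 * \<alpha>\<^sup>2 * (cos t)\<^sup>2 + 2 * \<alpha>\<^sup>2 * (sin t)\<^sup>2)"
    by (simp add: L_quad_def algebra_simps)
  moreover have "0 \<le> 4 * \<alpha>\<^sup>2 * (cos t)\<^sup>2 + 2 * \<alpha>\<^sup>2 * (sin t)\<^sup>2"
    by simp
  ultimately show "(sin t)\<^sup>2 \<le> 4 * L_quad \<alpha> t"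
    by linarith
qed

lemma L_J_integrand_bounds:
  assumes "0 < \<alpha>" "\<alpha> \<le> 1/2" "0 \<le> t" "t \<le> pi/2"
  defines "K \<equiv> L_quad \<alpha> t * sqrt (L_quad \<alpha> t)"
  shows "\<alpha>\<^sup>2 * cos t / K \<le> L_J_integrand \<alpha> t" "L_J_integrand \<alpha> t \<le> \<alpha>\<^sup>2 * cos t / K + 2 * \<alpha>"
proof -
  define c s where "c = cos t" and "s = sin t"
  have cs: "s\<^sup>2 = 1 - c\<^sup>2" "0 \<le> c" "c \<le> 1"
    using assms by (simp_all add: c_def s_def sin_squared_eq cos_ge_zero)
  have H: "0 < L_quad \<alpha> t"
    using assms(1) by (rule L_quad_pos)
  then have K: "0 < K"
    by (simp add: K_def)
  have "\<alpha> * s\<^sup>2 \<le> sqrt (L_quad \<alpha> t) * (4 * L_quad \<alpha> t)"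
    using L_quad_lower_bounds[OF assms(1,2), of t] H by (intro mult_mono) (simp_all add: s_def)
  then have sK: "\<alpha> * s\<^sup>2 \<le> 4 * K"
    by (simp add: K_def mult_ac)
  have diff: "L_J_integrand \<alpha> t - \<alpha>\<^sup>2 * cos t / K = \<alpha>\<^sup>2 * (1 - c)\<^sup>2 / (2 * K)"
    using K unfolding L_J_integrand_def K_def[symmetric] c_def[symmetric] s_def[symmetric] cs(1)
    by (simp add: field_simps power2_eq_square)
  have "(1 - c)\<^sup>2 \<le> (1 - c) * (1 + c)"
    using cs by (simp add: power2_eq_square mult_left_mono)
  also have "\<dots> = s\<^sup>2"
    using cs(1) by (simp add: algebra_simps power2_eq_square)
  finally have "\<alpha>\<^sup>2 * (1 - c)\<^sup>2 \<le> \<alpha>\<^sup>2 * s\<^sup>2"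
    by (rule mult_left_mono) simp
  also have "\<dots> = \<alpha> * (\<alpha> * s\<^sup>2)"
    by (simp add: power2_eq_square)
  also have "\<dots> \<le> \<alpha> * (4 * K)"
    using sK assms(1) by simp
  finally have "\<alpha>\<^sup>2 * (1 - c)\<^sup>2 / (2 * K) \<le> 2 * \<alpha>"
    using K by (simp add: field_simps)
  moreover have "0 \<le> \<alpha>\<^sup>2 * (1 - c)\<^sup>2 / (2 * K)"
    using K by simp
  ultimately show "\<alpha>\<^sup>2 * cos t / K \<le> L_J_integrand \<alpha> t" "L_J_integrand \<alpha> t \<le> \<alpha>\<^sup>2 * cos t / K + 2 * \<alpha>"
    using diff by linarith+
qed

lemma L_J_bounds:
  assumes "0 < \<alpha>" "\<alpha> \<le> 1/2"
  shows "2 / sqrt (1 + 2 * \<alpha>\<^sup>2) \<le> L_J \<alpha>" "L_J \<alpha> \<le> 2 / sqrt (1 + 2 * \<alpha>\<^sup>2) + pi * \<alpha>"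
proof -
  have "L_quad \<alpha> t \<noteq> 0" for t
    using L_quad_pos[OF assms(1), of t] by simp
  then have "continuous_on {0..pi/2} (L_J_integrand \<alpha>)"
    unfolding L_J_integrand_def by (intro continuous_intros) auto
  then have J: "(L_J_integrand \<alpha> has_integral L_J \<alpha>) {0..pi/2}"
    unfolding L_J_def by (intro integrable_integral integrable_continuous_interval)
  have lower: "((\<lambda>t. \<alpha>\<^sup>2 * cos t / (L_quad \<alpha> t * sqrt (L_quad \<alpha> t))) has_integral 2 / sqrt (1 + 2 * \<alpha>\<^sup>2))
      {0..pi/2}"
    using assms(1) by (rule L_quad_cos_has_integral)
  then have upper: "((\<lambda>t. \<alpha>\<^sup>2 * cos t / (L_quad \<alpha> t * sqrt (L_quad \<alpha> t)) + 2 * \<alpha>) has_integral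
      2 / sqrt (1 + 2 * \<alpha>\<^sup>2) + pi * \<alpha>) {0..pi/2}"
    using has_integral_const_real[of "2 * \<alpha>" 0 "pi/2"] by (intro has_integral_add) simp_all
  show "2 / sqrt (1 + 2 * \<alpha>\<^sup>2) \<le> L_J \<alpha>"
    using lower J L_J_integrand_bounds(1)[OF assms] by (rule has_integral_le) auto
  show "L_J \<alpha> \<le> 2 / sqrt (1 + 2 * \<alpha>\<^sup>2) + pi * \<alpha>"
    using J upper L_J_integrand_bounds(2)[OF assms] by (rule has_integral_le) auto
qed

lemma L_J_tendsto: "(L_J \<longlongrightarrow> 2) (at_right 0)"
proof (rule tendsto_sandwich)
  have ev: "\<forall>\<^sub>F \<alpha> in at_right 0. 0 < \<alpha> \<and> \<alpha> \<le> (1/2 :: real)"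
    using eventually_at_right_real[of 0 "1/2"] by (auto elim: eventually_mono)
  show "\<forall>\<^sub>F \<alpha> in at_right 0. 2 / sqrt (1 + 2 * \<alpha>\<^sup>2) \<le> L_J \<alpha>"
    using ev by eventually_elim (simp add: L_J_bounds)
  show "\<forall>\<^sub>F \<alpha> in at_right 0. L_J \<alpha> \<le> 2 / sqrt (1 + 2 * \<alpha>\<^sup>2) + pi * \<alpha>"
    using ev by eventually_elim (simp add: L_J_bounds)
  have "((\<lambda>\<alpha>. 2 / sqrt (1 + 2 * \<alpha>\<^sup>2)) \<longlongrightarrow> 2 / sqrt (1 + 2 * 0\<^sup>2)) (at_right (0::real))"
    by (intro tendsto_intros) simp_all
  then show "((\<lambda>\<alpha>. 2 / sqrt (1 + 2 * \<alpha>\<^sup>2)) \<longlongrightarrow> 2) (at_right 0)"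
    by simp
  have "((\<lambda>\<alpha>. 2 / sqrt (1 + 2 * \<alpha>\<^sup>2) + pi * \<alpha>) \<longlongrightarrow> 2 / sqrt (1 + 2 * 0\<^sup>2) + pi * 0) (at_right (0::real))"
    by (intro tendsto_intros) simp_all
  then show "((\<lambda>\<alpha>. 2 / sqrt (1 + 2 * \<alpha>\<^sup>2) + pi * \<alpha>) \<longlongrightarrow> 2) (at_right 0)"
    by simp
qed

section \<open>The initial value y_L(0)\<close>

definition y_init :: "real \<Rightarrow> real" where
  "y_init \<alpha> = sqrt ((1 - sqrt (1 - 4 * \<alpha> ^ 4)) / 2)"

lemma y_init_unique:
  fixes x y \<alpha> :: real
  assumes "y < x" "0 < y" "x\<^sup>2 + y\<^sup>2 = 1" "x * y = \<alpha>\<^sup>2"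
  shows "y = y_init \<alpha>"
proof -
  have "(x\<^sup>2 - y\<^sup>2)\<^sup>2 = (x\<^sup>2 + y\<^sup>2)\<^sup>2 - 4 * (x * y)\<^sup>2"
    by (simp add: power2_eq_square algebra_simps)
  also have "\<dots> = 1 - 4 * \<alpha> ^ 4"
    using assms(3,4) by simp
  finally have square: "(x\<^sup>2 - y\<^sup>2)\<^sup>2 = 1 - 4 * \<alpha> ^ 4" .
  have "y\<^sup>2 \<le> x\<^sup>2"
    using assms(1,2) by (intro power_mono) simp_all
  then have "sqrt (1 - 4 * \<alpha> ^ 4) = x\<^sup>2 - y\<^sup>2"
    using real_sqrt_unique[OF square] by simp
  then have "(1 - sqrt (1 - 4 * \<alpha> ^ 4)) / 2 = y\<^sup>2"
    using assms(3) by simp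
  then show ?thesis
    using assms(2) by (simp add: y_init_def)
qed

lemma y_init_pos: "\<alpha> \<noteq> 0 \<Longrightarrow> 0 < y_init \<alpha>"
  by (simp add: y_init_def real_sqrt_lt_1_iff)

lemma y_init_has_derivative:
  assumes "0 < \<alpha>" "4 * \<alpha> ^ 4 < 1"
  defines "s \<equiv> sqrt (1 - 4 * \<alpha> ^ 4)"
  shows "(y_init has_real_derivative y_init \<alpha> * (1 + s) / (\<alpha> * s)) (at \<alpha>)"
proof -
  have v: "0 < 1 - 4 * \<alpha> ^ 4"
    using assms(2) by simp
  then have s: "0 < s" "s < 1" "s\<^sup>2 = 1 - 4 * \<alpha> ^ 4"
    using assms(1) by (simp_all add: s_def)
  define y where "y = y_init \<alpha>"
  have u: "0 < (1 - s) / 2"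
    using s by simp
  have y_eq: "y = sqrt ((1 - s) / 2)"
    by (simp add: y_def y_init_def s_def)
  have y: "0 < y" "y\<^sup>2 = (1 - s) / 2"
    using u by (simp_all add: y_eq)
  have "((\<lambda>\<alpha>. 1 - 4 * \<alpha> ^ 4) has_real_derivative - (16 * \<alpha> ^ 3)) (at \<alpha>)"
    by (auto intro!: derivative_eq_intros)
  from DERIV_chain2[OF DERIV_real_sqrt[OF v] this]
  have "((\<lambda>\<alpha>. sqrt (1 - 4 * \<alpha> ^ 4)) has_real_derivative inverse s / 2 * - (16 * \<alpha> ^ 3)) (at \<alpha>)"
    unfolding s_def .
  from DERIV_cdivide[OF DERIV_diff[OF DERIV_const[of 1] this], of 2]
  have "((\<lambda>\<alpha>. (1 - sqrt (1 - 4 * \<alpha> ^ 4)) / 2) has_real_derivative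
      (0 - inverse s / 2 * - (16 * \<alpha> ^ 3)) / 2) (at \<alpha>)" .
  from DERIV_chain2[OF DERIV_real_sqrt[OF u[unfolded s_def]] this]
  have "(y_init has_real_derivative inverse y / 2 * ((0 - inverse s / 2 * - (16 * \<alpha> ^ 3)) / 2)) (at \<alpha>)"
    unfolding y_init_def[abs_def] y_eq s_def .
  moreover have "inverse y / 2 * ((0 - inverse s / 2 * - (16 * \<alpha> ^ 3)) / 2) = 2 * \<alpha> ^ 3 / (s * y)"
    using s y by (simp add: field_simps)
  moreover have "y * (1 + s) / (\<alpha> * s) = 2 * \<alpha> ^ 3 / (s * y)"
  proof -
    have "y * (1 + s) * y = y\<^sup>2 * (1 + s)"
      by (simp add: power2_eq_square)
    also have "\<dots> = (1 - s\<^sup>2) / 2"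
      unfolding y(2) by (simp add: power2_eq_square field_simps)
    also have "\<dots> = \<alpha> * (2 * \<alpha> ^ 3)"
      using s(3) by (simp add: eval_nat_numeral)
    finally have key: "y * (1 + s) * y = \<alpha> * (2 * \<alpha> ^ 3)" .
    have "y * (1 + s) / (\<alpha> * s) = y * (1 + s) * y / (\<alpha> * s * y)"
      using y by simp
    also have "\<dots> = \<alpha> * (2 * \<alpha> ^ 3) / (\<alpha> * (s * y))"
      unfolding key by (simp add: mult.assoc)
    also have "\<dots> = 2 * \<alpha> ^ 3 / (s * y)"
      using assms(1) by simp
    finally show ?thesis .
  qed
  ultimately show ?thesis
    by (simp add: y_def)
qed

(* The value of Y_L(0) at alpha = alpha(L): (alpha y_init' / y_init) / (alpha L_alpha'). *)
definition Y_ratio :: "real \<Rightarrow> real" where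
  "Y_ratio \<alpha> = (1 + sqrt (1 - 4 * \<alpha> ^ 4)) / sqrt (1 - 4 * \<alpha> ^ 4) / (- 2 * L_J \<alpha>)"

lemma Y_ratio_tendsto: "(Y_ratio \<longlongrightarrow> - 1 / 2) (at_right 0)"
proof -
  have "((\<lambda>\<alpha>. sqrt (1 - 4 * \<alpha> ^ 4)) \<longlongrightarrow> sqrt (1 - 4 * 0 ^ 4)) (at_right (0::real))"
    by (intro tendsto_intros)
  then have s: "((\<lambda>\<alpha>. sqrt (1 - 4 * \<alpha> ^ 4)) \<longlongrightarrow> 1) (at_right (0::real))"
    by simp
  have "(Y_ratio \<longlongrightarrow> (1 + 1) / 1 / (- 2 * 2)) (at_right 0)"
    unfolding Y_ratio_def[abs_def]
    by (intro tendsto_divide tendsto_add tendsto_mult tendsto_const s L_J_tendsto) simp_all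
  then show ?thesis
    by simp
qed

locale L_alpha_branch = steep_decreasing L_alpha "\<lambda>\<alpha>. - 2 * L_J \<alpha> / \<alpha>" a c for a c +
  assumes a_le_half: "a \<le> 1/2"
begin

lemma f_inv_admissible:
  assumes "L_alpha a \<le> L"
  shows "0 < f_inv L" "f_inv L < 1 / sqrt 2" "4 * f_inv L ^ 4 < 1"
proof -
  have \<alpha>: "0 < f_inv L" "f_inv L \<le> 1/2"
    using f_inv_bounds[OF assms] a_le_half by simp_all
  then show "0 < f_inv L"
    by simp
  have "1/2 < 1 / sqrt (2 :: real)"
    using sqrt2_less_2 by (simp add: field_simps)
  with \<alpha> show "f_inv L < 1 / sqrt 2"
    by linarith
  have "f_inv L ^ 4 \<le> (1/2) ^ 4"
    using \<alpha> by (intro power_mono) simp_all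
  then show "4 * f_inv L ^ 4 < 1"
    by (simp add: power_divide)
qed

lemma y_init_f_inv_has_derivative:
  assumes "L_alpha a < L"
  shows "((\<lambda>M. y_init (f_inv M)) has_real_derivative y_init (f_inv L) * Y_ratio (f_inv L)) (at L)"
proof -
  define \<alpha> s where "\<alpha> = f_inv L" and "s = sqrt (1 - 4 * \<alpha> ^ 4)"
  have \<alpha>: "0 < \<alpha>" "4 * \<alpha> ^ 4 < 1"
    using f_inv_admissible assms unfolding \<alpha>_def by simp_all
  have "0 < s"
    using \<alpha> by (simp add: s_def)
  from DERIV_chain2[OF y_init_has_derivative[OF \<alpha>[unfolded \<alpha>_def]] f_inv_has_derivative[OF assms]]
  have "((\<lambda>M. y_init (f_inv M)) has_real_derivative
      y_init \<alpha> * (1 + s) / (\<alpha> * s) * inverse (- 2 * L_J \<alpha> / \<alpha>)) (at L)"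
    unfolding \<alpha>_def s_def .
  moreover have "y_init \<alpha> * (1 + s) / (\<alpha> * s) * inverse (- 2 * L_J \<alpha> / \<alpha>) = y_init \<alpha> * Y_ratio \<alpha>"
    using \<alpha>(1) \<open>0 < s\<close>
    by (cases "L_J \<alpha> = 0") (simp_all add: Y_ratio_def s_def[symmetric] field_simps)
  ultimately show ?thesis
    by (simp add: \<alpha>_def)
qed

lemma deriv_div_eq_Y_ratio:
  assumes "L_alpha a \<le> T0" "T0 < L" and h: "\<And>M. T0 < M \<Longrightarrow> h M = y_init (f_inv M)"
  shows "deriv h L / h L = Y_ratio (f_inv L)"
proof -
  have "(h has_real_derivative y_init (f_inv L) * Y_ratio (f_inv L)) (at L)"
  proof (rule has_field_derivative_transform_within_open[where S = "{T0<..}"])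
    show "((\<lambda>M. y_init (f_inv M)) has_real_derivative y_init (f_inv L) * Y_ratio (f_inv L)) (at L)"
      using assms(1,2) by (intro y_init_f_inv_has_derivative) simp
  qed (use assms in auto)
  moreover have "0 < y_init (f_inv L)"
    using f_inv_admissible(1)[of L] assms(1,2) by (intro y_init_pos) simp
  ultimately show ?thesis
    using h[OF assms(2)] by (simp add: DERIV_imp_deriv)
qed

end

lemma L_alpha_branch_exists: "\<exists>a. L_alpha_branch a 1"
proof -
  have "\<forall>\<^sub>F \<alpha> in at_right 0. 1 < L_J \<alpha>"
    using L_J_tendsto by (rule order_tendstoD) simp
  then obtain a0 where "0 < a0" and J: "\<And>\<alpha>. 0 < \<alpha> \<Longrightarrow> \<alpha> < a0 \<Longrightarrow> 1 < L_J \<alpha>"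
    by (auto simp: eventually_at_right_field)
  define a where "a = min (a0 / 2) (1/2)"
  have "L_alpha_branch a 1"
  proof unfold_locales
    show "0 < a" "a \<le> 1/2"
      using \<open>0 < a0\<close> by (simp_all add: a_def)
    fix \<alpha> :: real
    assume "0 < \<alpha>" "\<alpha> \<le> a"
    then show "(L_alpha has_real_derivative - 2 * L_J \<alpha> / \<alpha>) (at \<alpha>)"
      by (intro L_alpha_has_derivative)
    have "1 < L_J \<alpha>"
      using \<open>0 < \<alpha>\<close> \<open>\<alpha> \<le> a\<close> \<open>0 < a0\<close> by (intro J) (simp_all add: a_def)
    then show "\<alpha> * (- 2 * L_J \<alpha> / \<alpha>) \<le> - 1"
      using \<open>0 < \<alpha>\<close> by simp
  qed simp
  then show ?thesis ..
qed

theorem lemma8p4: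
  fixes x y z :: "real \<Rightarrow> real \<Rightarrow> real"
  assumes init: "\<And>L \<alpha>. L > pi * sqrt 2 \<Longrightarrow> 0 < \<alpha> \<Longrightarrow> \<alpha> < 1 / sqrt 2 \<Longrightarrow>
      L_alpha \<alpha> = L \<Longrightarrow>
      x L 0 > y L 0 \<and> y L 0 > 0 \<and> (x L 0)\<^sup>2 + (y L 0)\<^sup>2 = 1 \<and> x L 0 * y L 0 = \<alpha>\<^sup>2
      \<and> z L 0 = 0"
    and ode_x: "\<And>L t. L > pi * sqrt 2 \<Longrightarrow>
      ((x L) has_real_derivative (- x L t * z L t)) (at t)"
    and ode_y: "\<And>L t. L > pi * sqrt 2 \<Longrightarrow>
      ((y L) has_real_derivative (y L t * z L t)) (at t)"
    and ode_z: "\<And>L t. L > pi * sqrt 2 \<Longrightarrow>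
      ((z L) has_real_derivative ((x L t)\<^sup>2 - (y L t)\<^sup>2)) (at t)"
  shows "((\<lambda>L. deriv (\<lambda>M. y M 0) L / y L 0) \<longlongrightarrow> - 1 / 2) at_top"
proof -
  obtain a where "L_alpha_branch a 1"
    using L_alpha_branch_exists by blast
  then interpret L_alpha_branch a 1 .
  define T0 where "T0 = max (pi * sqrt 2) (L_alpha a)"
  have y_eq: "y M 0 = y_init (f_inv M)" if "T0 < M" for M
  proof -
    have "y M 0 < x M 0 \<and> 0 < y M 0 \<and> (x M 0)\<^sup>2 + (y M 0)\<^sup>2 = 1 \<and> x M 0 * y M 0 = (f_inv M)\<^sup>2"
      using that init[of M "f_inv M"] f_inv_bounds[of M] f_f_inv[of M] f_inv_admissible[of M]
      by (simp add: T0_def)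
    then show ?thesis
      using y_init_unique by blast
  qed
  have "((\<lambda>L. Y_ratio (f_inv L)) \<longlongrightarrow> - 1 / 2) at_top"
    using Y_ratio_tendsto f_inv_tendsto by (rule filterlim_compose)
  moreover have "\<forall>\<^sub>F L in at_top. Y_ratio (f_inv L) = deriv (\<lambda>M. y M 0) L / y L 0"
  proof (rule eventually_mono[OF eventually_gt_at_top[of T0]])
    show "Y_ratio (f_inv L) = deriv (\<lambda>M. y M 0) L / y L 0" if "T0 < L" for L
      by (rule deriv_div_eq_Y_ratio[symmetric, OF _ that y_eq]) (simp add: T0_def)
  qed
  ultimately show ?thesis
    by (rule Lim_transform_eventually)
qed

end
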